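(* Every Lie bialgebra structure on $\mathfrak{W}\oplus\mathfrak{W}$ is coboundary: if $\delta:\mathfrak{W}\oplus\mathfrak{W}\to\bigwedge^2(\mathfrak{W}\oplus\mathfrak{W})$ is a linear map making $(\mathfrak{W}\oplus\mathfrak{W},\delta)$ a Lie bialgebra, then there exists $r\in\bigwedge^2(\mathfrak{W}\oplus\mathfrak{W})$ such that $\delta(x)=[x\otimes 1+1\otimes x,\,r]$ for all $x\in\mathfrak{W}\oplus\mathfrak{W}$.
   Context: The Witt algebra $\mathfrak{W}$ is the complex Lie algebra with basis $\{L_m: m\in\mathbb{Z}\}$ and bracket $[L_m,L_n]=(m-n)L_{m+n}$; $\mathfrak{W}\oplus\mathfrak{W}$ has basis $\{L_m,\bar L_m\}$ with the two copies commuting. A Lie bialgebra structure on a Lie algebra $\mathfrak{g}$ is a linear map (cobracket) $\delta:\mathfrak{g}\to\bigwedge^2\mathfrak{g}\subset\mathfrak{g}\otimes\mathfrak{g}$ satisfying the cocycle condition $\delta([x,y])=[x\otimes1+1\otimes x,\delta(y)]-[y\otimes1+1\otimes y,\delta(x)]$ and the co-Jacobi identity $\mathrm{Cycl}\big((\delta\otimes\mathrm{id})\delta(x)\big)=0$, where $\mathrm{Cycl}(a\otimes b\otimes c)=a\otimes b\otimes c+c\otimes a\otimes b+b\otimes c\otimes a$. *)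

theory Defs
  imports Complex_Main
begin

text \<open>Basis of W (+) W: index (False, m) is L_m, index (True, m) is the barred L_m.
  Elements of g = W (+) W are finitely supported coefficient functions idx => complex;
  g (x) g and g (x) g (x) g are finitely supported functions on idx^2, idx^3
  (coefficients w.r.t. the basis e_a (x) e_b, resp. e_a (x) e_b (x) e_c).
  The exterior square is the subspace of antisymmetric 2-tensors.\<close>

type_synonym idx = "bool \<times> int"
type_synonym vec = "idx \<Rightarrow> complex"
type_synonym ten2 = "idx \<times> idx \<Rightarrow> complex"
type_synonym ten3 = "idx \<times> idx \<times> idx \<Rightarrow> complex"

definition supp :: "('a \<Rightarrow> complex) \<Rightarrow> 'a set" where
  "supp f = {i. f i \<noteq> 0}"

definition fsupp :: "('a \<Rightarrow> complex) \<Rightarrow> bool" where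
  "fsupp f \<longleftrightarrow> finite (supp f)"

definition bvec :: "idx \<Rightarrow> vec" where
  "bvec a = (\<lambda>c. if c = a then 1 else 0)"

fun bbr :: "idx \<Rightarrow> idx \<Rightarrow> vec" where
  "bbr (s, m) (t, n) = (\<lambda>p. if s = t \<and> p = (s, m + n) then of_int (m - n) else 0)"

definition br :: "vec \<Rightarrow> vec \<Rightarrow> vec" where
  "br x y = (\<lambda>p. \<Sum>a\<in>supp x. \<Sum>b\<in>supp y. x a * y b * bbr a b p)"

text \<open>Action [x (x) 1 + 1 (x) x, t] of g on g (x) g.\<close>
definition ad2 :: "vec \<Rightarrow> ten2 \<Rightarrow> ten2" where
  "ad2 x t = (\<lambda>(p, q). \<Sum>(c, d)\<in>supp t.
      t (c, d) * (br x (bvec c) p * bvec d q + bvec c p * br x (bvec d) q))"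

definition antisym2 :: "ten2 \<Rightarrow> bool" where
  "antisym2 t \<longleftrightarrow> (\<forall>a b. t (a, b) = - t (b, a))"

definition delta_id :: "(vec \<Rightarrow> ten2) \<Rightarrow> ten2 \<Rightarrow> ten3" where
  "delta_id \<delta> t = (\<lambda>(p, q, r). \<Sum>(c, d)\<in>supp t. t (c, d) * \<delta> (bvec c) (p, q) * bvec d r)"

text \<open>Cycl(a (x) b (x) c) = a(x)b(x)c + c(x)a(x)b + b(x)c(x)a, in coefficients.\<close>
definition cycl :: "ten3 \<Rightarrow> ten3" where
  "cycl T = (\<lambda>(i, j, k). T (i, j, k) + T (j, k, i) + T (k, i, j))"

definition lie_bialgebra_WW :: "(vec \<Rightarrow> ten2) \<Rightarrow> bool" where
  "lie_bialgebra_WW \<delta> \<longleftrightarrow>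
     (\<forall>x. fsupp x \<longrightarrow> fsupp (\<delta> x) \<and> antisym2 (\<delta> x)) \<and>
     (\<forall>x y. fsupp x \<longrightarrow> fsupp y \<longrightarrow> \<delta> (\<lambda>i. x i + y i) = (\<lambda>k. \<delta> x k + \<delta> y k)) \<and>
     (\<forall>c x. fsupp x \<longrightarrow> \<delta> (\<lambda>i. c * x i) = (\<lambda>k. c * \<delta> x k)) \<and>
     (\<forall>x y. fsupp x \<longrightarrow> fsupp y \<longrightarrow>
        \<delta> (br x y) = (\<lambda>k. ad2 x (\<delta> y) k - ad2 y (\<delta> x) k)) \<and>
     (\<forall>x. fsupp x \<longrightarrow> cycl (delta_id \<delta> (\<delta> x)) = (\<lambda>_. 0))"

end

theory Submission
  imports Defs
begin

text \<open>Write \<open>L'\<^sub>m\<close> for the generators of the second copy. Restricted to basis vectors, \<open>\<delta>\<close> is a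
  1-cocycle of \<open>W \<oplus> W\<close> with values in \<open>\<Lambda>\<^sup>2(W \<oplus> W)\<close>, and every such cocycle is inner. Coboundaries are subtracted until the cocycle vanishes. Since
  \<open>L\<^sub>0\<close> and \<open>L'\<^sub>0\<close> act diagonally with integer weights and tensors have finite support, their
  images are coboundaries; afterwards the image of every basis vector has the weight of that vector.
  The one mixed coefficient this leaves is removed by a multiple of \<open>L\<^sub>0 \<and> L'\<^sub>0\<close>. Within one
  copy, the image of \<open>L\<^sub>1\<close> is a coboundary up to a multiple of \<open>L\<^sub>2 \<and> L\<^bsub>-1\<^esub>\<close>; the cocycle
  conditions for \<open>[L\<^sub>1, L\<^bsub>-1\<^esub>]\<close>, \<open>[L\<^sub>1, L\<^bsub>-2\<^esub>]\<close> and \<open>[L\<^bsub>-1\<^esub>, L\<^sub>2]\<close> are first-order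
  recurrences whose finitely supported solutions vanish, which kills that multiple and the images of
  \<open>L\<^bsub>-1\<^esub>\<close>, \<open>L\<^bsub>-2\<^esub>\<close>, \<open>L\<^sub>2\<close>; all other degrees follow by induction.\<close>

lemma fsupp_add: "fsupp f \<Longrightarrow> fsupp g \<Longrightarrow> fsupp (\<lambda>x. f x + g x)"
  unfolding fsupp_def supp_def by (rule finite_subset[of _ "{i. f i \<noteq> 0} \<union> {i. g i \<noteq> 0}"]) auto

lemma fsupp_diff: "fsupp f \<Longrightarrow> fsupp g \<Longrightarrow> fsupp (\<lambda>x. f x - g x)"
  unfolding fsupp_def supp_def by (rule finite_subset[of _ "{i. f i \<noteq> 0} \<union> {i. g i \<noteq> 0}"]) auto

lemma antisym2D: "antisym2 t \<Longrightarrow> t (p, q) = - t (q, p)"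
  unfolding antisym2_def by blast

lemma antisym2_add: "antisym2 f \<Longrightarrow> antisym2 g \<Longrightarrow> antisym2 (\<lambda>x. f x + g x)"
  unfolding antisym2_def by (metis minus_add_distrib)

lemma antisym2_diff: "antisym2 f \<Longrightarrow> antisym2 g \<Longrightarrow> antisym2 (\<lambda>x. f x - g x)"
  unfolding antisym2_def by (metis minus_diff_eq minus_diff_minus)

lemma supp_bvec: "supp (bvec a) = {a}"
  by (auto simp: supp_def bvec_def)

lemma fsupp_bvec: "fsupp (bvec a)"
  by (simp add: fsupp_def supp_bvec)

lemma sum_mult_bvec: "finite A \<Longrightarrow> (\<Sum>a\<in>A. x a * bvec a i) = (if i \<in> A then x i else 0)"
  by (simp add: bvec_def if_distrib[of "\<lambda>c. _ * c"] cong: if_cong)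

lemma fsupp_sum_mult_bvec: "finite A \<Longrightarrow> fsupp (\<lambda>i. \<Sum>a\<in>A. x a * bvec a i)"
  unfolding fsupp_def supp_def by (rule finite_subset[of _ A]) (auto simp: sum_mult_bvec)

lemma fsupp_eq_sum_bvec: "fsupp x \<Longrightarrow> x = (\<lambda>i. \<Sum>a\<in>supp x. x a * bvec a i)"
  by (rule ext) (auto simp: fsupp_def sum_mult_bvec supp_def)

lemma finite_antidiagonal_coeffs: "fsupp t \<Longrightarrow> finite {i. t ((s, i), (s, k - i)) \<noteq> 0}"
proof -
  assume "fsupp t"
  then have "finite ((\<lambda>y. snd (fst y)) ` supp t)" unfolding fsupp_def by simp
  moreover have "{i. t ((s, i), (s, k - i)) \<noteq> 0} \<subseteq> (\<lambda>y. snd (fst y)) ` supp t"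
    by (force simp: supp_def)
  ultimately show ?thesis by (rule finite_subset[rotated])
qed

lemma finite_support_recurrence_vanishes:
  fixes f :: "int \<Rightarrow> 'a::semiring_no_zero_divisors"
  assumes fin: "finite {i. f i \<noteq> 0}"
    and rec: "\<And>i. i \<ge> i0 \<Longrightarrow> a i * f (i + 1) = b i * f i"
    and b: "\<And>i. i \<ge> i0 \<Longrightarrow> b i \<noteq> 0"
    and "i \<ge> i0"
  shows "f i = 0"
proof (rule ccontr)
  assume "f i \<noteq> 0"
  have "f (i + int n) \<noteq> 0" for n
  proof (induction n)
    case (Suc n)
    with rec[of "i + int n"] b[of "i + int n"] \<open>i \<ge> i0\<close> show ?case
      by (auto simp: algebra_simps)
  qed (use \<open>f i \<noteq> 0\<close> in simp)
  then have "range (\<lambda>n. i + int n) \<subseteq> {i. f i \<noteq> 0}" by auto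
  moreover have "infinite (range (\<lambda>n. i + int n))"
    using finite_imageD[of "\<lambda>n. i + int n" UNIV] by (auto simp: inj_def)
  ultimately show False using fin finite_subset by blast
qed

lemma odd_reflection_vanishes:
  fixes f :: "int \<Rightarrow> 'a::ab_group_add"
  assumes odd: "\<And>i. f (c - i) = - f i"
    and upper: "\<And>i. i \<ge> a \<Longrightarrow> f i = 0"
    and window: "\<And>i. c - a < i \<Longrightarrow> i < a \<Longrightarrow> f i = 0 \<or> f (c - i) = 0"
  shows "f i = 0"
proof -
  consider "i \<ge> a" | "c - i \<ge> a" | "c - a < i" "i < a" by linarith
  then show ?thesis
    by cases (use upper[of "c - i"] odd[of i] window[of i] upper[of i] in auto)
qed

text \<open>The coefficients of \<open>L\<^sub>2 \<and> L\<^bsub>-1\<^esub>\<close> along \<open>L\<^sub>i \<otimes> L\<^bsub>1-i\<^esub>\<close>: the part of the image of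
  \<open>L\<^sub>1\<close> on these tensors that is not a coboundary (see \<open>antidiagonal_normal_form\<close>).\<close>

definition L2_wedge_Lm1 :: "int \<Rightarrow> complex" where
  "L2_wedge_Lm1 i = (if i = 2 then 1 else if i = -1 then -1 else 0)"

text \<open>\<open>\<phi> k i\<close> stands for the coefficient of \<open>L\<^sub>i \<otimes> L\<^bsub>k-i\<^esub>\<close> in the image of \<open>L\<^sub>k\<close> under a
  cocycle of one copy of the Witt algebra; \<open>cocycle\<close> is the cocycle condition for \<open>[L\<^sub>m, L\<^sub>n]\<close>.\<close>

locale witt_antidiagonal_cocycle =
  fixes \<phi> :: "int \<Rightarrow> int \<Rightarrow> complex" and C :: complex
  assumes finite_support: "finite {i. \<phi> k i \<noteq> 0}"
    and odd: "\<phi> k (k - i) = - \<phi> k i"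
    and degree_0: "\<phi> 0 i = 0"
    and degree_1: "\<phi> 1 i = C * L2_wedge_Lm1 i"
    and cocycle: "of_int (m - n) * \<phi> (m + n) i =
        of_int (2*m - i) * \<phi> n (i - m) + of_int (m - n + i) * \<phi> n i
      - of_int (2*n - i) * \<phi> m (i - n) - of_int (n - m + i) * \<phi> m i"
begin

lemma cocycle_1_m1:
  "of_int (2 - i) * \<phi> (-1) (i - 1) + of_int (2 + i) * \<phi> (-1) i
     = - of_int (2 + i) * C * L2_wedge_Lm1 (i + 1) - of_int (2 - i) * C * L2_wedge_Lm1 i"
  using cocycle[of 1 "-1" i] by (simp add: degree_0 degree_1 algebra_simps)

lemma cocycle_1_m2:
  "3 * \<phi> (-1) i = of_int (2 - i) * \<phi> (-2) (i - 1) + of_int (3 + i) * \<phi> (-2) i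
     + of_int (4 + i) * C * L2_wedge_Lm1 (i + 2) + of_int (3 - i) * C * L2_wedge_Lm1 i"
  using cocycle[of 1 "-2" i] by (simp add: degree_1 algebra_simps)

lemma cocycle_m1_2:
  "-3 * C * L2_wedge_Lm1 i = of_int (-2 - i) * \<phi> 2 (i + 1) + of_int (i - 3) * \<phi> 2 i
     - of_int (4 - i) * \<phi> (-1) (i - 2) - of_int (3 + i) * \<phi> (-1) i"
  using cocycle[of "-1" 2 i] by (simp add: degree_1 algebra_simps)

lemma degree_m1_upper: "i \<ge> 2 \<Longrightarrow> \<phi> (-1) i = 0"
proof (rule finite_support_recurrence_vanishes[where a = "\<lambda>i. of_int (3 + i)" and b = "\<lambda>i. of_int (i - 1)"])
  show "of_int (3 + j) * \<phi> (-1) (j + 1) = of_int (j - 1) * \<phi> (-1) j" if "j \<ge> 2" for j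
    using cocycle_1_m1[of "j + 1"] that by (simp add: L2_wedge_Lm1_def algebra_simps)
qed (simp_all add: finite_support)

lemma degree_m2_upper: "i \<ge> 2 \<Longrightarrow> \<phi> (-2) i = 0"
proof (rule finite_support_recurrence_vanishes[where a = "\<lambda>i. of_int (4 + i)" and b = "\<lambda>i. of_int (i - 1)"])
  show "of_int (4 + j) * \<phi> (-2) (j + 1) = of_int (j - 1) * \<phi> (-2) j" if "j \<ge> 2" for j
    using cocycle_1_m2[of "j + 1"] degree_m1_upper[of "j + 1"] that
    by (simp add: L2_wedge_Lm1_def algebra_simps)
qed (simp_all add: finite_support)

lemma C_eq_0: "C = 0"
  using cocycle_1_m2[of 2] degree_m1_upper[of 2] degree_m2_upper[of 2]
  by (simp add: L2_wedge_Lm1_def)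

lemma degree_2_upper: "i \<ge> 4 \<Longrightarrow> \<phi> 2 i = 0"
proof (rule finite_support_recurrence_vanishes[where a = "\<lambda>i. of_int (2 + i)" and b = "\<lambda>i. of_int (i - 3)"])
  show "of_int (2 + j) * \<phi> 2 (j + 1) = of_int (j - 3) * \<phi> 2 j" if "j \<ge> 4" for j
    using cocycle_m1_2[of j] degree_m1_upper[of j] degree_m1_upper[of "j - 2"] that
    by (simp add: L2_wedge_Lm1_def algebra_simps)
qed (simp_all add: finite_support)

lemma degree_m1_vanishes: "\<phi> (-1) i = 0"
proof (rule odd_reflection_vanishes[where c = "-1" and a = 2])
  have "\<phi> (-1) 1 = 0"
    using cocycle_m1_2[of 3] degree_2_upper[of 4] degree_m1_upper[of 3] by (simp add: L2_wedge_Lm1_def)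
  moreover from this have "\<phi> (-1) 0 = 0"
    using cocycle_1_m1[of 1] C_eq_0 by simp
  moreover fix j :: int assume "-1 - 2 < j" "j < 2"
  then have "j \<in> {0, 1} \<or> -1 - j \<in> {0, 1}" by auto
  ultimately show "\<phi> (-1) j = 0 \<or> \<phi> (-1) (-1 - j) = 0" by (metis empty_iff insert_iff)
qed (use odd[of "-1"] degree_m1_upper in simp_all)


lemma degree_2_vanishes: "\<phi> 2 i = 0"
proof (rule odd_reflection_vanishes[where c = 2 and a = 4])
  have "\<phi> 2 1 = 0"
    using odd[of 2 1] by simp
  moreover from this have "\<phi> 2 0 = 0"
    using cocycle_m1_2[of 0] C_eq_0 degree_m1_vanishes by simp
  moreover from this have "\<phi> 2 (-1) = 0"
    using cocycle_m1_2[of "-1"] C_eq_0 degree_m1_vanishes by simp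
  moreover fix j :: int assume "2 - 4 < j" "j < 4"
  then have "j \<in> {-1, 0, 1} \<or> 2 - j \<in> {-1, 0, 1}" by auto
  ultimately show "\<phi> 2 j = 0 \<or> \<phi> 2 (2 - j) = 0" by (metis empty_iff insert_iff)
qed (use odd[of 2] degree_2_upper in simp_all)

lemma degree_m2_vanishes: "\<phi> (-2) i = 0"
proof (rule odd_reflection_vanishes[where c = "-2" and a = 2])
  have "\<phi> (-2) (-1) = 0"
    using odd[of "-2" "-1"] by simp
  moreover from this have "\<phi> (-2) 0 = 0"
    using cocycle_1_m2[of 0] C_eq_0 degree_m1_vanishes by simp
  moreover from this have "\<phi> (-2) 1 = 0"
    using cocycle_1_m2[of 1] C_eq_0 degree_m1_vanishes by simp
  moreover fix j :: int assume "-2 - 2 < j" "j < 2"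
  then have "j \<in> {-1, 0, 1} \<or> -2 - j \<in> {-1, 0, 1}" by auto
  ultimately show "\<phi> (-2) j = 0 \<or> \<phi> (-2) (-2 - j) = 0" by (metis empty_iff insert_iff)
qed (use odd[of "-2"] degree_m2_upper in simp_all)

lemma positive_degree_vanishes: "k \<ge> 1 \<Longrightarrow> \<phi> k i = 0"
proof (induction k arbitrary: i rule: int_ge_induct)
  case base
  then show ?case using degree_1 C_eq_0 by simp
next
  case (step k)
  show ?case
  proof (cases "k = 1")
    case True
    then show ?thesis using degree_2_vanishes by simp
  next
    case False
    then have "of_int (1 - k) * \<phi> (k + 1) i = 0"
      using cocycle[of 1 k i] step.IH degree_1 C_eq_0 by (simp add: add.commute)
    with False show ?thesis by simp
  qed
qed

lemma negative_degree_vanishes: "k \<le> -1 \<Longrightarrow> \<phi> k i = 0"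
proof (induction k arbitrary: i rule: int_le_induct)
  case base
  then show ?case using degree_m1_vanishes by simp
next
  case (step k)
  show ?case
  proof (cases "k = -1")
    case True
    then show ?thesis using degree_m2_vanishes by simp
  next
    case False
    have "of_int (-1 - k) * \<phi> (k - 1) i = 0"
      using cocycle[of "-1" k i] step.IH degree_m1_vanishes by simp
    moreover have "-1 - k \<noteq> 0"
      using False by simp
    ultimately show ?thesis by (metis mult_eq_0_iff of_int_eq_0_iff)
  qed
qed

lemma vanishes: "\<phi> k i = 0"
proof -
  consider "k \<ge> 1" | "k \<le> -1" | "k = 0" by linarith
  then show ?thesis
    by cases (simp_all add: positive_degree_vanishes negative_degree_vanishes degree_0)
qed

end

text \<open>The coefficient of \<open>L\<^sub>i \<otimes> L\<^bsub>1-i\<^esub>\<close> in \<open>[L\<^sub>1, \<Sum>\<^sub>j \<rho> j L\<^sub>j \<otimes> L\<^bsub>-j\<^esub>]\<close>.\<close>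

definition ad_L1_coeff :: "(int \<Rightarrow> complex) \<Rightarrow> int \<Rightarrow> complex" where
  "ad_L1_coeff \<rho> i = of_int (2 - i) * \<rho> (i - 1) + of_int (1 + i) * \<rho> i"

lemma ad_L1_coeff_odd:
  assumes "\<And>i. \<rho> (-i) = - \<rho> i"
  shows "ad_L1_coeff \<rho> (1 - i) = - ad_L1_coeff \<rho> i"
  using assms[of i] assms[of "i - 1"] by (simp add: ad_L1_coeff_def algebra_simps)

lemma ad_L1_coeff_add: "ad_L1_coeff (\<lambda>i. f i + g i) i = ad_L1_coeff f i + ad_L1_coeff g i"
  by (simp add: ad_L1_coeff_def algebra_simps)

lemma antidiagonal_normal_form_bounded:
  fixes \<phi> :: "int \<Rightarrow> complex"
  assumes "N \<ge> 2" and "\<And>i. \<phi> (1 - i) = - \<phi> i" and "\<And>i. i > N \<Longrightarrow> \<phi> i = 0"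
  shows "\<exists>\<rho> C. finite {i. \<rho> i \<noteq> 0} \<and> (\<forall>i. \<rho> (-i) = - \<rho> i) \<and>
      (\<forall>i. \<phi> i = ad_L1_coeff \<rho> i + C * L2_wedge_Lm1 i)"
  using assms
proof (induction N arbitrary: \<phi> rule: int_ge_induct)
  case base
  define \<rho> :: "int \<Rightarrow> complex" where
    "\<rho> i = (if i = 1 then \<phi> 1 / 2 else if i = -1 then - \<phi> 1 / 2 else 0)" for i
  have "finite {i. \<rho> i \<noteq> 0}"
    by (rule finite_subset[of _ "{1, -1}"]) (auto simp: \<rho>_def)
  moreover have "\<forall>i. \<rho> (-i) = - \<rho> i"
    by (auto simp: \<rho>_def)
  moreover have "\<phi> i = ad_L1_coeff \<rho> i + \<phi> 2 * L2_wedge_Lm1 i" for i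
  proof -
    consider "i > 2" | "i < -1" | "i \<in> {-1, 0, 1, 2}" by force
    then show ?thesis
    proof cases
      case 1
      then show ?thesis using base.prems(2) by (auto simp: ad_L1_coeff_def \<rho>_def L2_wedge_Lm1_def)
    next
      case 2
      then show ?thesis using base.prems(1)[of i] base.prems(2)[of "1 - i"]
        by (auto simp: ad_L1_coeff_def \<rho>_def L2_wedge_Lm1_def)
    next
      case 3
      then show ?thesis using base.prems(1)[of 1] base.prems(1)[of 2]
        by (auto simp: ad_L1_coeff_def \<rho>_def L2_wedge_Lm1_def)
    qed
  qed
  ultimately show ?case by blast
next
  case (step N)
  txt \<open>Subtract the coboundary of \<open>b (L\<^sub>N \<otimes> L\<^bsub>-N\<^esub> - L\<^bsub>-N\<^esub> \<otimes> L\<^sub>N)\<close>, which removes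
    the top coefficient \<open>\<phi> (N + 1)\<close> and nothing above it.\<close>
  define b where "b = \<phi> (N + 1) / of_int (1 - N)"
  define \<rho>\<^sub>0 :: "int \<Rightarrow> complex" where
    "\<rho>\<^sub>0 i = (if i = N then b else if i = - N then - b else 0)" for i
  have \<rho>\<^sub>0_odd: "\<forall>i. \<rho>\<^sub>0 (-i) = - \<rho>\<^sub>0 i"
    using step.hyps by (auto simp: \<rho>\<^sub>0_def)
  define \<psi> where "\<psi> i = \<phi> i - ad_L1_coeff \<rho>\<^sub>0 i" for i
  have \<psi>_odd: "\<psi> (1 - i) = - \<psi> i" for i
    using step.prems(1)[of i] ad_L1_coeff_odd[of \<rho>\<^sub>0 i] \<rho>\<^sub>0_odd by (simp add: \<psi>_def)
  have \<psi>_upper: "\<psi> i = 0" if "i > N" for i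
  proof (cases "i = N + 1")
    case True
    have "of_int (1 - N) \<noteq> (0::complex)" using step.hyps by simp
    with True step.hyps show ?thesis by (simp add: \<psi>_def ad_L1_coeff_def \<rho>\<^sub>0_def b_def)
  next
    case False
    with that step.hyps step.prems(2)[of i] show ?thesis by (simp add: \<psi>_def ad_L1_coeff_def \<rho>\<^sub>0_def)
  qed
  obtain \<rho>\<^sub>1 C where \<rho>\<^sub>1: "finite {i. \<rho>\<^sub>1 i \<noteq> 0}" "\<forall>i. \<rho>\<^sub>1 (-i) = - \<rho>\<^sub>1 i"
      "\<forall>i. \<psi> i = ad_L1_coeff \<rho>\<^sub>1 i + C * L2_wedge_Lm1 i"
    using step.IH[of \<psi>, OF \<psi>_odd \<psi>_upper] by blast
  define \<rho> where "\<rho> i = \<rho>\<^sub>0 i + \<rho>\<^sub>1 i" for i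
  have "finite {i. \<rho> i \<noteq> 0}"
    by (rule finite_subset[of _ "{N, - N} \<union> {i. \<rho>\<^sub>1 i \<noteq> 0}"]) (use \<rho>\<^sub>1(1) in \<open>auto simp: \<rho>_def \<rho>\<^sub>0_def\<close>)
  moreover have "\<forall>i. \<rho> (-i) = - \<rho> i"
    using \<rho>\<^sub>0_odd \<rho>\<^sub>1(2) by (simp add: \<rho>_def)
  moreover have "\<forall>i. \<phi> i = ad_L1_coeff \<rho> i + C * L2_wedge_Lm1 i"
    using \<rho>\<^sub>1(3) unfolding \<rho>_def ad_L1_coeff_add \<psi>_def by (simp add: algebra_simps)
  ultimately show ?case by blast
qed

lemma antidiagonal_normal_form:
  fixes \<phi> :: "int \<Rightarrow> complex"
  assumes fin: "finite {i. \<phi> i \<noteq> 0}" and odd: "\<And>i. \<phi> (1 - i) = - \<phi> i"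
  shows "\<exists>\<rho> C. finite {i. \<rho> i \<noteq> 0} \<and> (\<forall>i. \<rho> (-i) = - \<rho> i) \<and>
      (\<forall>i. \<phi> i = ad_L1_coeff \<rho> i + C * L2_wedge_Lm1 i)"
proof -
  define N where "N = Max (insert 2 {i. \<phi> i \<noteq> 0})"
  have "N \<ge> 2" and "\<And>i. i > N \<Longrightarrow> \<phi> i = 0"
    using fin by (auto simp: N_def)
  then show ?thesis using antidiagonal_normal_form_bounded[of N \<phi>] odd by blast
qed

section \<open>The action of basis vectors on tensors\<close>

text \<open>The coefficients of \<open>ad2 (bvec a) t\<close> (lemma \<open>ad2_bvec\<close>), read off from
  \<open>[L\<^sub>k, L\<^sub>m] = (k - m) L\<^bsub>k+m\<^esub>\<close>.\<close>

definition ad_basis :: "idx \<Rightarrow> ten2 \<Rightarrow> ten2" where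
  "ad_basis a t = (\<lambda>(p, q).
      (if fst p = fst a then of_int (2 * snd a - snd p) * t ((fst a, snd p - snd a), q) else 0)
    + (if fst q = fst a then of_int (2 * snd a - snd q) * t (p, (fst a, snd q - snd a)) else 0))"

lemma ad_basis_apply:
  "ad_basis (s, k) t ((s1, m1), (s2, m2)) =
      (if s1 = s then of_int (2 * k - m1) * t ((s, m1 - k), (s2, m2)) else 0)
    + (if s2 = s then of_int (2 * k - m2) * t ((s1, m1), (s, m2 - k)) else 0)"
  by (simp add: ad_basis_def)

lemma ad_basis_commutator_same_copy:
  "ad_basis (s, m) (ad_basis (s, n) t) x - ad_basis (s, n) (ad_basis (s, m) t) x
     = of_int (m - n) * ad_basis (s, m + n) t x"
  by (cases x) (auto simp: ad_basis_def algebra_simps)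

lemma ad_basis_commute_other_copy:
  "s \<noteq> s' \<Longrightarrow> ad_basis (s, m) (ad_basis (s', n) t) x = ad_basis (s', n) (ad_basis (s, m) t) x"
  by (cases x) (auto simp: ad_basis_def algebra_simps)

lemma ad_basis_zero [simp]: "ad_basis a (\<lambda>_. 0) x = 0"
  by (cases x) (simp add: ad_basis_def)

lemma ad_basis_add: "ad_basis a (\<lambda>x. f x + g x) y = ad_basis a f y + ad_basis a g y"
  by (cases y) (simp add: ad_basis_def algebra_simps)

lemma ad_basis_diff: "ad_basis a (\<lambda>x. f x - g x) y = ad_basis a f y - ad_basis a g y"
  by (cases y) (simp add: ad_basis_def algebra_simps)

lemma antisym2_ad_basis:
  assumes "antisym2 t"
  shows "antisym2 (ad_basis a t)"
  unfolding antisym2_def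
proof (intro allI)
  fix p q :: idx
  obtain s k s1 m1 s2 m2 where "a = (s, k)" "p = (s1, m1)" "q = (s2, m2)"
    by (metis prod.collapse)
  moreover have "t ((s, m1 - k), (s2, m2)) = - t ((s2, m2), (s, m1 - k))"
    "t ((s1, m1), (s, m2 - k)) = - t ((s, m2 - k), (s1, m1))"
    using antisym2D[OF assms] by blast+
  ultimately show "ad_basis a t (p, q) = - ad_basis a t (q, p)"
    by (cases "s1 = s"; cases "s2 = s") (simp_all add: ad_basis_apply)
qed

lemma fsupp_ad_basis:
  assumes "fsupp t"
  shows "fsupp (ad_basis a t)"
proof -
  obtain s k where a: "a = (s, k)" by (cases a)
  let ?shift\<^sub>1 = "\<lambda>(c, d). ((fst c, snd c + k), d)" and ?shift\<^sub>2 = "\<lambda>(c, d). (c, (fst d, snd d + k))"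
  have "x \<in> ?shift\<^sub>1 ` supp t \<union> ?shift\<^sub>2 ` supp t" if "x \<in> supp (ad_basis a t)" for x
  proof -
    obtain s1 m1 s2 m2 where x: "x = ((s1, m1), (s2, m2))" by (metis prod.collapse)
    from that have "(s1 = s \<and> ((s, m1 - k), (s2, m2)) \<in> supp t) \<or> (s2 = s \<and> ((s1, m1), (s, m2 - k)) \<in> supp t)"
      by (auto simp: a x supp_def ad_basis_apply split: if_splits)
    then show ?thesis
      by (auto simp: x intro: image_eqI[where x = "((s, m1 - k), (s2, m2))"]
          image_eqI[where x = "((s1, m1), (s, m2 - k))"])
  qed
  with assms show ?thesis
    unfolding fsupp_def by (meson finite_Un finite_imageI finite_subset subsetI)
qed

definition weight :: "bool \<Rightarrow> idx \<times> idx \<Rightarrow> int" where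
  "weight s x = (if fst (fst x) = s then snd (fst x) else 0) + (if fst (snd x) = s then snd (snd x) else 0)"

lemma ad_basis_degree_0: "ad_basis (s, 0) t x = - of_int (weight s x) * t x"
  by (cases x) (auto simp: ad_basis_def weight_def algebra_simps)

lemma weight_swap: "weight s (q, p) = weight s (p, q)"
  by (simp add: weight_def)


section \<open>Cocycles on the basis\<close>

text \<open>\<open>D a\<close> stands for the image of the basis vector \<open>a\<close>; the two relations are the cocycle
  conditions for \<open>[L\<^sub>m, L\<^sub>n] = (m - n) L\<^bsub>m+n\<^esub>\<close> within one copy and for the vanishing brackets
  between the two copies.\<close>

definition basis_cocycle :: "(idx \<Rightarrow> ten2) \<Rightarrow> bool" where
  "basis_cocycle D \<longleftrightarrow> (\<forall>a. fsupp (D a) \<and> antisym2 (D a)) \<and>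
    (\<forall>s m n x. of_int (m - n) * D (s, m + n) x =
       ad_basis (s, m) (D (s, n)) x - ad_basis (s, n) (D (s, m)) x) \<and>
    (\<forall>s s' m n x. s \<noteq> s' \<longrightarrow> ad_basis (s, m) (D (s', n)) x = ad_basis (s', n) (D (s, m)) x)"

definition inner_on_basis :: "(idx \<Rightarrow> ten2) \<Rightarrow> bool" where
  "inner_on_basis D \<longleftrightarrow> (\<exists>r. fsupp r \<and> antisym2 r \<and> (\<forall>a x. D a x = ad_basis a r x))"

lemma basis_cocycle_fsupp: "basis_cocycle D \<Longrightarrow> fsupp (D a)"
  unfolding basis_cocycle_def by blast

lemma basis_cocycle_antisym2: "basis_cocycle D \<Longrightarrow> antisym2 (D a)"
  unfolding basis_cocycle_def by blast

lemma basis_cocycle_same_copy: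
  "basis_cocycle D \<Longrightarrow>
    of_int (m - n) * D (s, m + n) x = ad_basis (s, m) (D (s, n)) x - ad_basis (s, n) (D (s, m)) x"
  unfolding basis_cocycle_def by blast

lemma basis_cocycle_other_copy:
  "basis_cocycle D \<Longrightarrow> s \<noteq> s' \<Longrightarrow> ad_basis (s, m) (D (s', n)) x = ad_basis (s', n) (D (s, m)) x"
  unfolding basis_cocycle_def by blast

lemma basis_cocycle_diff_coboundary:
  assumes D: "basis_cocycle D" and r: "fsupp r" "antisym2 r"
  shows "basis_cocycle (\<lambda>a x. D a x - ad_basis a r x)"
  unfolding basis_cocycle_def
proof (intro conjI allI impI)
  fix a
  show "fsupp (\<lambda>x. D a x - ad_basis a r x)"
    using basis_cocycle_fsupp[OF D] fsupp_ad_basis[OF r(1)] by (rule fsupp_diff)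
  show "antisym2 (\<lambda>x. D a x - ad_basis a r x)"
    using basis_cocycle_antisym2[OF D] antisym2_ad_basis[OF r(2)] by (rule antisym2_diff)
next
  fix s :: bool and m n :: int and x :: "idx \<times> idx"
  show "of_int (m - n) * (D (s, m + n) x - ad_basis (s, m + n) r x) =
      ad_basis (s, m) (\<lambda>x. D (s, n) x - ad_basis (s, n) r x) x
    - ad_basis (s, n) (\<lambda>x. D (s, m) x - ad_basis (s, m) r x) x"
    using basis_cocycle_same_copy[OF D, of m n s x] ad_basis_commutator_same_copy[of s m n r x]
    by (simp add: ad_basis_diff algebra_simps)
next
  fix s s' :: bool and m n :: int and x :: "idx \<times> idx"
  assume "s \<noteq> s'"
  then show "ad_basis (s, m) (\<lambda>x. D (s', n) x - ad_basis (s', n) r x) x =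
      ad_basis (s', n) (\<lambda>x. D (s, m) x - ad_basis (s, m) r x) x"
    using basis_cocycle_other_copy[OF D] ad_basis_commute_other_copy by (simp add: ad_basis_diff)
qed

lemma inner_on_basis_if_diff_coboundary:
  assumes "fsupp r" "antisym2 r" and "inner_on_basis (\<lambda>a x. D a x - ad_basis a r x)"
  shows "inner_on_basis D"
proof -
  obtain r' where r': "fsupp r'" "antisym2 r'" "\<forall>a x. D a x - ad_basis a r x = ad_basis a r' x"
    using assms(3) unfolding inner_on_basis_def by blast
  have "fsupp (\<lambda>x. r x + r' x)" "antisym2 (\<lambda>x. r x + r' x)"
    using assms(1,2) r'(1,2) by (simp_all add: fsupp_add antisym2_add)
  moreover have "D a x = ad_basis a (\<lambda>x. r x + r' x) x" for a x
    using r'(3)[rule_format, of a x] by (simp add: ad_basis_add algebra_simps)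
  ultimately show ?thesis unfolding inner_on_basis_def by blast
qed

section \<open>Degree zero\<close>

text \<open>\<open>L\<^sub>0\<close> and \<open>L'\<^sub>0\<close> act diagonally, with the weights as eigenvalues; choosing \<open>k\<close> beyond the
  support of \<open>E (s, 0)\<close>, the cocycle condition for \<open>[L\<^sub>k, L\<^sub>0]\<close> evaluated at a tensor shifted by \<open>k\<close>
  isolates a nonzero multiple of a weight-zero coefficient of \<open>E (s, 0)\<close>.\<close>

lemma basis_cocycle_degree_0_weight_0:
  assumes E: "basis_cocycle E" and weight: "weight s x = 0"
  shows "E (s, 0) x = 0"
proof -
  obtain \<sigma> m s2 m2 where x: "x = ((\<sigma>, m), (s2, m2))" by (metis prod.collapse)
  define u where "u = E (s, 0)"
  have shifted: "ad_basis (\<sigma>, k) u ((\<sigma>, m + k), (s2, m2)) = 0" for k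
  proof (cases "\<sigma> = s")
    case True
    have "weight s ((\<sigma>, m + k), (s2, m2)) = k" using weight True by (auto simp: x weight_def)
    then show ?thesis
      using basis_cocycle_same_copy[OF E, of k 0 s "((\<sigma>, m + k), (s2, m2))"] True
      unfolding u_def ad_basis_degree_0 by simp
  next
    case False
    have "weight s ((\<sigma>, m + k), (s2, m2)) = 0" using weight False by (auto simp: x weight_def)
    then show ?thesis
      using basis_cocycle_other_copy[OF E False, of k 0 "((\<sigma>, m + k), (s2, m2))"]
      unfolding u_def ad_basis_degree_0 by simp
  qed
  have "finite (supp u)" using basis_cocycle_fsupp[OF E] by (simp add: u_def fsupp_def)
  then obtain B where B: "\<And>y. y \<in> supp u \<Longrightarrow> snd (fst y) \<le> B"
    by (metis finite_imageI Max_ge image_eqI)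
  define k where "k = \<bar>B\<bar> + \<bar>m\<bar> + 1"
  have "u ((\<sigma>, m + k), y) = 0" for y
    using B[of "((\<sigma>, m + k), y)"] by (force simp: supp_def k_def)
  then have "ad_basis (\<sigma>, k) u ((\<sigma>, m + k), (s2, m2)) = of_int (k - m) * u ((\<sigma>, m), (s2, m2))"
    by (simp add: ad_basis_apply)
  with shifted have "of_int (k - m) * u ((\<sigma>, m), (s2, m2)) = 0" by simp
  moreover have "k - m \<noteq> 0" unfolding k_def by simp
  ultimately show ?thesis unfolding x u_def by simp
qed

lemma basis_cocycle_degree_0_coboundary:
  assumes D: "basis_cocycle D"
  shows "\<exists>r. fsupp r \<and> antisym2 r \<and> (\<forall>s x. D (s, 0) x = ad_basis (s, 0) r x)"
proof -
  txt \<open>\<open>L\<^sub>0\<close> and \<open>L'\<^sub>0\<close> act on a basis tensor by minus its weights, so \<open>r\<close> divides by a nonzero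
    weight; the condition for \<open>[L\<^sub>0, L'\<^sub>0] = 0\<close> makes both choices agree.\<close>
  define r :: ten2 where "r x =
      (if weight False x \<noteq> 0 then - D (False, 0) x / of_int (weight False x)
       else if weight True x \<noteq> 0 then - D (True, 0) x / of_int (weight True x) else 0)" for x
  have cross: "of_int (weight False x) * D (True, 0) x = of_int (weight True x) * D (False, 0) x" for x
    using basis_cocycle_other_copy[OF D, of False True 0 0 x] unfolding ad_basis_degree_0 by simp
  have "D (s, 0) x = ad_basis (s, 0) r x" for s x
  proof (cases "weight s x = 0")
    case True
    then show ?thesis using basis_cocycle_degree_0_weight_0[OF D True] unfolding ad_basis_degree_0 by simp
  next
    case False
    then show ?thesis
      using cross[of x] by (cases s) (auto simp: ad_basis_degree_0 r_def field_simps)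
  qed
  moreover have "fsupp r"
  proof -
    have "supp r \<subseteq> supp (D (False, 0)) \<union> supp (D (True, 0))"
      unfolding supp_def r_def by auto
    then show ?thesis
      using basis_cocycle_fsupp[OF D] unfolding fsupp_def by (meson finite_Un finite_subset)
  qed
  moreover have "antisym2 r"
    unfolding antisym2_def
  proof (intro allI)
    fix p q :: idx
    show "r (p, q) = - r (q, p)"
      using antisym2D[OF basis_cocycle_antisym2[OF D], of _ p q]
      unfolding r_def weight_swap[of _ q p] by simp
  qed
  ultimately show ?thesis by blast
qed

section \<open>Cocycles vanishing in degree zero\<close>

definition vanishes_in_degree_0 :: "(idx \<Rightarrow> ten2) \<Rightarrow> bool" where
  "vanishes_in_degree_0 E \<longleftrightarrow> (\<forall>s x. E (s, 0) x = 0)"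

definition weight_zero :: "ten2 \<Rightarrow> bool" where
  "weight_zero r \<longleftrightarrow> (\<forall>s x. r x \<noteq> 0 \<longrightarrow> weight s x = 0)"

lemma ad_basis_degree_0_weight_zero:
  assumes "weight_zero r"
  shows "ad_basis (s, 0) r x = 0"
proof (cases "r x = 0")
  case False
  then have "weight s x = 0" using assms unfolding weight_zero_def by blast
  then show ?thesis by (simp add: ad_basis_degree_0)
qed (simp add: ad_basis_degree_0)

lemma vanishes_in_degree_0_diff_coboundary:
  "vanishes_in_degree_0 E \<Longrightarrow> weight_zero r \<Longrightarrow> vanishes_in_degree_0 (\<lambda>a x. E a x - ad_basis a r x)"
  unfolding vanishes_in_degree_0_def by (simp add: ad_basis_degree_0_weight_zero)

lemma basis_cocycle_weight:
  assumes E: "basis_cocycle E" and E0: "vanishes_in_degree_0 E" and nz: "E (s, k) x \<noteq> 0"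
  shows "weight s x = k" and "weight (\<not> s) x = 0"
proof -
  have zero: "E (s', 0) = (\<lambda>_. 0)" for s'
    using E0 unfolding vanishes_in_degree_0_def by auto
  have "of_int (0 - k) * E (s, 0 + k) x = ad_basis (s, 0) (E (s, k)) x - ad_basis (s, k) (E (s, 0)) x"
    by (rule basis_cocycle_same_copy[OF E])
  then have "of_int (weight s x - k) * E (s, k) x = 0"
    unfolding ad_basis_degree_0 zero by (auto simp: algebra_simps)
  with nz show "weight s x = k" by simp
  have "ad_basis (\<not> s, 0) (E (s, k)) x = ad_basis (s, k) (E (\<not> s, 0)) x"
    using basis_cocycle_other_copy[OF E, of "\<not> s" s] by simp
  then have "of_int (weight (\<not> s) x) * E (s, k) x = 0"
    unfolding ad_basis_degree_0 zero by simp
  with nz show "weight (\<not> s) x = 0" by simp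
qed

text \<open>The mixed coefficient of \<open>L\<^sub>1 \<otimes> L'\<^sub>0\<close> in the image of \<open>L\<^sub>1\<close> is removed by a multiple of
  \<open>L\<^sub>0 \<and> L'\<^sub>0\<close>, and once it is zero, the other-copy cocycle conditions kill all the mixed
  coefficients that remain possible by weight.\<close>

lemma mixed_coefficient_coboundary:
  "\<exists>r. fsupp r \<and> antisym2 r \<and> weight_zero r \<and>
     E (False, 1) ((False, 1), (True, 0)) = ad_basis (False, 1) r ((False, 1), (True, 0))"
proof -
  define c where "c = E (False, 1) ((False, 1), (True, 0))"
  define r :: ten2 where
    "r x = (if x = ((False, 0), (True, 0)) then c else if x = ((True, 0), (False, 0)) then - c else 0)" for x
  have "fsupp r" unfolding fsupp_def supp_def
    by (rule finite_subset[of _ "{((False, 0), (True, 0)), ((True, 0), (False, 0))}"]) (auto simp: r_def)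
  moreover have "antisym2 r" "weight_zero r"
    unfolding antisym2_def weight_zero_def r_def weight_def by auto
  moreover have "E (False, 1) ((False, 1), (True, 0)) = ad_basis (False, 1) r ((False, 1), (True, 0))"
    by (simp add: ad_basis_apply r_def c_def)
  ultimately show ?thesis by blast
qed

lemma mixed_coefficients_vanish:
  assumes E: "basis_cocycle E" and zero: "E (False, 1) ((False, 1), (True, 0)) = 0"
  shows "E (True, k) ((False, 0), (True, k)) = 0" and "E (False, k) ((False, k), (True, 0)) = 0"
proof -
  have barred: "E (True, k') ((False, 0), (True, k')) = 0" for k'
    using basis_cocycle_other_copy[OF E, of False True 1 k' "((False, 1), (True, k'))"] zero
    by (simp add: ad_basis_apply)
  then show "E (True, k) ((False, 0), (True, k)) = 0" .
  show "E (False, k) ((False, k), (True, 0)) = 0"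
    using basis_cocycle_other_copy[OF E, of False True k 1 "((False, k), (True, 1))"] barred[of 1]
    by (simp add: ad_basis_apply)
qed

definition same_copy_support :: "ten2 \<Rightarrow> bool" where
  "same_copy_support r \<longleftrightarrow> (\<forall>x. r x \<noteq> 0 \<longrightarrow> fst (fst x) = fst (snd x))"

lemma ad_basis_same_copy_support_mixed:
  assumes "same_copy_support r" and "s1 \<noteq> s2"
  shows "ad_basis a r ((s1, m1), (s2, m2)) = 0"
  using assms unfolding same_copy_support_def by (cases a) (force simp: ad_basis_apply)


lemma degree_1_antidiagonal_coboundary:
  assumes E: "basis_cocycle E"
  shows "\<exists>r C. fsupp r \<and> antisym2 r \<and> weight_zero r \<and> same_copy_support r \<and>
     (\<forall>s i. E (s, 1) ((s, i), (s, 1 - i)) - ad_basis (s, 1) r ((s, i), (s, 1 - i)) = C s * L2_wedge_Lm1 i)"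
proof -
  have "\<exists>\<rho> c. finite {i. \<rho> i \<noteq> 0} \<and> (\<forall>i. \<rho> (-i) = - \<rho> i) \<and>
      (\<forall>i. E (s, 1) ((s, i), (s, 1 - i)) = ad_L1_coeff \<rho> i + c * L2_wedge_Lm1 i)" for s
  proof (rule antidiagonal_normal_form)
    show "finite {i. E (s, 1) ((s, i), (s, 1 - i)) \<noteq> 0}"
      using basis_cocycle_fsupp[OF E] by (rule finite_antidiagonal_coeffs)
    show "E (s, 1) ((s, 1 - i), (s, 1 - (1 - i))) = - E (s, 1) ((s, i), (s, 1 - i))" for i
      using antisym2D[OF basis_cocycle_antisym2[OF E], of "(s, 1)" "(s, 1 - i)" "(s, i)"] by simp
  qed
  then obtain \<rho> C where \<rho>: "\<And>s. finite {i. \<rho> s i \<noteq> 0}" "\<And>s i. \<rho> s (-i) = - \<rho> s i"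
      and E_1: "\<And>s i. E (s, 1) ((s, i), (s, 1 - i)) = ad_L1_coeff (\<rho> s) i + C s * L2_wedge_Lm1 i"
    by metis
  define r :: ten2 where "r x =
      (if fst (fst x) = fst (snd x) \<and> snd (snd x) = - snd (fst x)
       then \<rho> (fst (fst x)) (snd (fst x)) else 0)" for x
  have "supp r \<subseteq> (\<lambda>(s, i). ((s, i), (s, - i))) ` (SIGMA s:UNIV. {i. \<rho> s i \<noteq> 0})"
  proof
    fix x assume "x \<in> supp r"
    then obtain s i where "x = ((s, i), (s, - i))" "\<rho> s i \<noteq> 0"
      by (cases x) (auto simp: supp_def r_def split: if_splits)
    then show "x \<in> (\<lambda>(s, i). ((s, i), (s, - i))) ` (SIGMA s:UNIV. {i. \<rho> s i \<noteq> 0})"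
      by force
  qed
  moreover have "finite (SIGMA s:UNIV. {i. \<rho> s i \<noteq> 0})"
    using \<rho>(1) by (intro finite_SigmaI) simp_all
  ultimately have "fsupp r"
    unfolding fsupp_def by (meson finite_imageI finite_subset)
  moreover have "antisym2 r"
    unfolding antisym2_def r_def using \<rho>(2) by force
  moreover have "weight_zero r" "same_copy_support r"
    unfolding weight_zero_def same_copy_support_def r_def weight_def by auto
  moreover have
    "E (s, 1) ((s, i), (s, 1 - i)) - ad_basis (s, 1) r ((s, i), (s, 1 - i)) = C s * L2_wedge_Lm1 i"
    for s i
    using E_1[of s i] by (simp add: ad_basis_apply ad_L1_coeff_def r_def)
  ultimately show ?thesis by blast
qed

lemma antidiagonal_coefficients_vanish:
  assumes E: "basis_cocycle E" and E0: "vanishes_in_degree_0 E"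
    and E_1: "\<And>i. E (s, 1) ((s, i), (s, 1 - i)) = c * L2_wedge_Lm1 i"
  shows "E (s, k) ((s, i), (s, k - i)) = 0"
proof -
  interpret witt_antidiagonal_cocycle "\<lambda>k i. E (s, k) ((s, i), (s, k - i))" c
  proof
    show "finite {i. E (s, k) ((s, i), (s, k - i)) \<noteq> 0}" for k
      using basis_cocycle_fsupp[OF E] by (rule finite_antidiagonal_coeffs)
    show "E (s, k) ((s, k - i), (s, k - (k - i))) = - E (s, k) ((s, i), (s, k - i))" for k i
      using antisym2D[OF basis_cocycle_antisym2[OF E], of "(s, k)" "(s, k - i)" "(s, i)"] by simp
    show "E (s, 0) ((s, i), (s, 0 - i)) = 0" for i
      using E0 unfolding vanishes_in_degree_0_def by blast
    show "E (s, 1) ((s, i), (s, 1 - i)) = c * L2_wedge_Lm1 i" for i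
      by (rule E_1)
    show "of_int (m - n) * E (s, m + n) ((s, i), (s, m + n - i)) =
        of_int (2 * m - i) * E (s, n) ((s, i - m), (s, n - (i - m)))
      + of_int (m - n + i) * E (s, n) ((s, i), (s, n - i))
      - of_int (2 * n - i) * E (s, m) ((s, i - n), (s, m - (i - n)))
      - of_int (n - m + i) * E (s, m) ((s, i), (s, m - i))"
      for m n i
    proof -
      have shifts: "n - (i - m) = m + n - i" "m - (i - n) = m + n - i" "m + n - i - m = n - i"
          "m + n - i - n = m - i" "2 * m - (m + n - i) = m - n + i" "2 * n - (m + n - i) = n - m + i"
        by simp_all
      show ?thesis
        using basis_cocycle_same_copy[OF E, of m n s "((s, i), (s, m + n - i))"]
        unfolding ad_basis_apply shifts by simp
    qed
  qed
  show ?thesis using vanishes[of k i] by simp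
qed

lemma normalised_basis_cocycle_vanishes:
  assumes E: "basis_cocycle E" and E0: "vanishes_in_degree_0 E"
    and mixed: "\<And>k. E (False, k) ((False, k), (True, 0)) = 0" "\<And>k. E (True, k) ((False, 0), (True, k)) = 0"
    and E_1: "\<And>s i. E (s, 1) ((s, i), (s, 1 - i)) = C s * L2_wedge_Lm1 i"
  shows "E a x = 0"
proof (rule ccontr)
  obtain s k where a: "a = (s, k)" by (cases a)
  obtain s1 m1 s2 m2 where x: "x = ((s1, m1), (s2, m2))" by (metis prod.collapse)
  note antisym = antisym2D[OF basis_cocycle_antisym2[OF E]]
  assume nz: "E a x \<noteq> 0"
  have weight: "weight s x = k" "weight (\<not> s) x = 0"
    using basis_cocycle_weight[OF E E0 nz[unfolded a]] by auto
  consider "s1 = s" "s2 = s" | "s1 = s" "s2 \<noteq> s" | "s1 \<noteq> s" "s2 = s" | "s1 \<noteq> s" "s2 \<noteq> s" by blast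
  then show False
  proof cases
    case 1
    then have "m2 = k - m1" using weight unfolding x weight_def by simp
    with 1 nz antidiagonal_coefficients_vanish[OF E E0 E_1, of s k m1] show False
      unfolding a x by simp
  next
    case 2
    then have "m1 = k" "m2 = 0" "s2 = (\<not> s)" using weight unfolding x weight_def by auto
    with 2 nz mixed antisym[of "(True, k)" "(True, k)" "(False, 0)"] show False
      unfolding a x by (cases s) auto
  next
    case 3
    then have "m2 = k" "m1 = 0" "s1 = (\<not> s)" using weight unfolding x weight_def by auto
    with 3 nz mixed antisym[of "(False, k)" "(True, 0)" "(False, k)"] show False
      unfolding a x by (cases s) auto
  next
    case 4
    then have "k = 0" using weight unfolding x weight_def by simp
    with nz E0 show False unfolding a vanishes_in_degree_0_def by blast
  qed
qed


lemma inner_if_mixed_coefficient_vanishes: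
  assumes E: "basis_cocycle E" and E0: "vanishes_in_degree_0 E"
    and mixed: "E (False, 1) ((False, 1), (True, 0)) = 0"
  shows "inner_on_basis E"
proof -
  obtain r C where r: "fsupp r" "antisym2 r" "weight_zero r" "same_copy_support r"
    and E_1: "\<And>s i. E (s, 1) ((s, i), (s, 1 - i)) - ad_basis (s, 1) r ((s, i), (s, 1 - i))
                  = C s * L2_wedge_Lm1 i"
    using degree_1_antidiagonal_coboundary[OF E] by blast
  define E' where "E' = (\<lambda>a x. E a x - ad_basis a r x)"
  have "E' a x = 0" for a x
  proof (rule normalised_basis_cocycle_vanishes)
    show "basis_cocycle E'"
      unfolding E'_def using E r(1,2) by (rule basis_cocycle_diff_coboundary)
    show "vanishes_in_degree_0 E'"
      unfolding E'_def using E0 r(3) by (rule vanishes_in_degree_0_diff_coboundary)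
    show "E' (False, k) ((False, k), (True, 0)) = 0" for k
    proof -
      have "ad_basis (False, k) r ((False, k), (True, 0)) = 0"
        by (rule ad_basis_same_copy_support_mixed[OF r(4)]) simp
      then show ?thesis
        unfolding E'_def using mixed_coefficients_vanish(2)[OF E mixed, of k] by simp
    qed
    show "E' (True, k) ((False, 0), (True, k)) = 0" for k
    proof -
      have "ad_basis (True, k) r ((False, 0), (True, k)) = 0"
        by (rule ad_basis_same_copy_support_mixed[OF r(4)]) simp
      then show ?thesis
        unfolding E'_def using mixed_coefficients_vanish(1)[OF E mixed, of k] by simp
    qed
    show "E' (s, 1) ((s, i), (s, 1 - i)) = C s * L2_wedge_Lm1 i" for s i
      unfolding E'_def by (rule E_1)
  qed
  then have "inner_on_basis E'"
    unfolding inner_on_basis_def fsupp_def supp_def antisym2_def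
    by (intro exI[of _ "\<lambda>_. 0"]) simp
  with r(1,2) show ?thesis
    unfolding E'_def by (rule inner_on_basis_if_diff_coboundary)
qed

lemma inner_if_vanishes_in_degree_0:
  assumes E: "basis_cocycle E" and E0: "vanishes_in_degree_0 E"
  shows "inner_on_basis E"
proof -
  obtain r where r: "fsupp r" "antisym2 r" "weight_zero r"
    and mixed: "E (False, 1) ((False, 1), (True, 0)) = ad_basis (False, 1) r ((False, 1), (True, 0))"
    using mixed_coefficient_coboundary by blast
  have "inner_on_basis (\<lambda>a x. E a x - ad_basis a r x)"
  proof (rule inner_if_mixed_coefficient_vanishes)
    show "basis_cocycle (\<lambda>a x. E a x - ad_basis a r x)"
      using E r(1,2) by (rule basis_cocycle_diff_coboundary)
    show "vanishes_in_degree_0 (\<lambda>a x. E a x - ad_basis a r x)"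
      using E0 r(3) by (rule vanishes_in_degree_0_diff_coboundary)
  qed (simp add: mixed)
  with r(1,2) show ?thesis by (rule inner_on_basis_if_diff_coboundary)
qed

theorem basis_cocycle_inner:
  assumes D: "basis_cocycle D"
  shows "inner_on_basis D"
proof -
  obtain r where r: "fsupp r" "antisym2 r" and D_0: "\<And>s x. D (s, 0) x = ad_basis (s, 0) r x"
    using basis_cocycle_degree_0_coboundary[OF D] by blast
  have "inner_on_basis (\<lambda>a x. D a x - ad_basis a r x)"
  proof (rule inner_if_vanishes_in_degree_0)
    show "basis_cocycle (\<lambda>a x. D a x - ad_basis a r x)"
      using D r by (rule basis_cocycle_diff_coboundary)
    show "vanishes_in_degree_0 (\<lambda>a x. D a x - ad_basis a r x)"
      unfolding vanishes_in_degree_0_def using D_0 by simp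
  qed
  with r show ?thesis by (rule inner_on_basis_if_diff_coboundary)
qed

section \<open>From the cobracket to its values on the basis\<close>

lemma br_bvec_bvec: "br (bvec a) (bvec c) = bbr a c"
  unfolding br_def supp_bvec by (simp add: bvec_def)

lemma br_bvec_right: "br x (bvec c) p = (\<Sum>a\<in>supp x. x a * bbr a c p)"
  unfolding br_def supp_bvec by (simp add: bvec_def)

lemma sum_supp_mult_delta:
  "finite (supp t) \<Longrightarrow> (\<Sum>z\<in>supp t. t z * (if z = z0 then e else 0)) = t z0 * e"
  by (simp add: if_distrib[of "\<lambda>c. _ * c"] sum.delta' cong: if_cong) (simp add: supp_def)

lemma ad2_bvec:
  assumes "fsupp t"
  shows "ad2 (bvec a) t y = ad_basis a t y"
proof -
  obtain s k where a: "a = (s, k)" by (cases a)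
  obtain s1 m1 s2 m2 where y: "y = ((s1, m1), (s2, m2))" by (metis prod.collapse)
  have fin: "finite (supp t)" using assms by (simp add: fsupp_def)
  have left: "bbr (s, k) c (s1, m1) * bvec d (s2, m2) =
      (if (c, d) = ((s, m1 - k), (s2, m2)) then if s1 = s then of_int (2 * k - m1) else 0 else 0)" for c d
    by (cases c) (auto simp: bvec_def)
  have right: "bvec c (s1, m1) * bbr (s, k) d (s2, m2) =
      (if (c, d) = ((s1, m1), (s, m2 - k)) then if s2 = s then of_int (2 * k - m2) else 0 else 0)" for c d
    by (cases d) (auto simp: bvec_def)
  have "ad2 (bvec a) t y =
      (\<Sum>z\<in>supp t. t z *
         (if z = ((s, m1 - k), (s2, m2)) then if s1 = s then of_int (2 * k - m1) else 0 else 0))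
    + (\<Sum>z\<in>supp t. t z *
         (if z = ((s1, m1), (s, m2 - k)) then if s2 = s then of_int (2 * k - m2) else 0 else 0))"
    unfolding ad2_def y a br_bvec_bvec
    by (simp add: case_prod_beta distrib_left sum.distrib left right del: prod.inject)
  then show ?thesis
    unfolding a y ad_basis_apply sum_supp_mult_delta[OF fin] by simp
qed

lemma ad2_eq_sum_bvec:
  assumes x: "fsupp x"
  shows "ad2 x t y = (\<Sum>a\<in>supp x. x a * ad2 (bvec a) t y)"
proof -
  obtain p q where y: "y = (p, q)" by (cases y)
  have "ad2 x t y = (\<Sum>z\<in>supp t. \<Sum>a\<in>supp x.
      x a * (t z * (bbr a (fst z) p * bvec (snd z) q + bvec (fst z) p * bbr a (snd z) q)))"
    unfolding ad2_def y br_bvec_right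
    by (simp add: case_prod_beta sum_distrib_left sum_distrib_right sum.distrib algebra_simps)
  also have "\<dots> = (\<Sum>a\<in>supp x. \<Sum>z\<in>supp t.
      x a * (t z * (bbr a (fst z) p * bvec (snd z) q + bvec (fst z) p * bbr a (snd z) q)))"
    by (rule sum.swap)
  also have "\<dots> = (\<Sum>a\<in>supp x. x a * ad2 (bvec a) t y)"
    unfolding ad2_def y br_bvec_bvec by (simp add: case_prod_beta sum_distrib_left)
  finally show ?thesis .
qed

lemma lie_bialgebra_WW_sum_bvec:
  assumes L: "lie_bialgebra_WW \<delta>" and A: "finite A"
  shows "\<delta> (\<lambda>i. \<Sum>a\<in>A. x a * bvec a i) = (\<lambda>k. \<Sum>a\<in>A. x a * \<delta> (bvec a) k)"
  using A
proof (induction A rule: finite_induct)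
  case empty
  have "fsupp (\<lambda>i::idx. 0::complex)" by (simp add: fsupp_def supp_def)
  then have "\<delta> (\<lambda>i. 0 * (\<lambda>i::idx. 0::complex) i) = (\<lambda>k. 0 * \<delta> (\<lambda>i. 0) k)"
    using L unfolding lie_bialgebra_WW_def by blast
  then show ?case by simp
next
  case (insert a A)
  have "fsupp (\<lambda>i. x a * bvec a i)"
    using fsupp_sum_mult_bvec[of "{a}" x] by simp
  moreover have "fsupp (\<lambda>i. \<Sum>a\<in>A. x a * bvec a i)"
    using insert.hyps(1) by (rule fsupp_sum_mult_bvec)
  ultimately have "\<delta> (\<lambda>i. x a * bvec a i + (\<Sum>a\<in>A. x a * bvec a i)) =
      (\<lambda>k. \<delta> (\<lambda>i. x a * bvec a i) k + \<delta> (\<lambda>i. \<Sum>a\<in>A. x a * bvec a i) k)"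
    using L unfolding lie_bialgebra_WW_def by blast
  moreover have "\<delta> (\<lambda>i. x a * bvec a i) = (\<lambda>k. x a * \<delta> (bvec a) k)"
    using L fsupp_bvec[of a] unfolding lie_bialgebra_WW_def by blast
  ultimately show ?case using insert by simp
qed

lemma lie_bialgebra_WW_basis_cocycle:
  assumes L: "lie_bialgebra_WW \<delta>"
  shows "basis_cocycle (\<lambda>a. \<delta> (bvec a))"
proof -
  have images: "fsupp (\<delta> (bvec a))" "antisym2 (\<delta> (bvec a))" for a
    using L fsupp_bvec unfolding lie_bialgebra_WW_def by blast+
  have cocycle: "\<delta> (br (bvec a) (bvec b)) = (\<lambda>k. ad2 (bvec a) (\<delta> (bvec b)) k - ad2 (bvec b) (\<delta> (bvec a)) k)"
    for a b
    using L fsupp_bvec unfolding lie_bialgebra_WW_def by blast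
  have scale: "\<delta> (\<lambda>i. c * bvec a i) = (\<lambda>k. c * \<delta> (bvec a) k)" for c a
    using L fsupp_bvec unfolding lie_bialgebra_WW_def by blast
  show ?thesis
    unfolding basis_cocycle_def
  proof (intro conjI allI impI)
    show "fsupp (\<delta> (bvec a))" "antisym2 (\<delta> (bvec a))" for a
      by (fact images)+
  next
    fix s :: bool and m n :: int and x :: "idx \<times> idx"
    have "br (bvec (s, m)) (bvec (s, n)) = (\<lambda>i. of_int (m - n) * bvec (s, m + n) i)"
      unfolding br_bvec_bvec by (auto simp: bvec_def)
    then have "\<delta> (br (bvec (s, m)) (bvec (s, n))) = (\<lambda>k. of_int (m - n) * \<delta> (bvec (s, m + n)) k)"
      using scale by simp
    then show "of_int (m - n) * \<delta> (bvec (s, m + n)) x =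
        ad_basis (s, m) (\<delta> (bvec (s, n))) x - ad_basis (s, n) (\<delta> (bvec (s, m))) x"
      using fun_cong[OF cocycle[of "(s, m)" "(s, n)"], of x] by (simp add: ad2_bvec images(1))
  next
    fix s s' :: bool and m n :: int and x :: "idx \<times> idx"
    assume "s \<noteq> s'"
    then have "br (bvec (s, m)) (bvec (s', n)) = (\<lambda>i. 0 * bvec (s, m) i)"
      unfolding br_bvec_bvec by auto
    then have "\<delta> (br (bvec (s, m)) (bvec (s', n))) = (\<lambda>k. 0)"
      using scale[of 0 "(s, m)"] by simp
    then show "ad_basis (s, m) (\<delta> (bvec (s', n))) x = ad_basis (s', n) (\<delta> (bvec (s, m))) x"
      using fun_cong[OF cocycle[of "(s, m)" "(s', n)"], of x] by (simp add: ad2_bvec images(1))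
  qed
qed

theorem mainTheorem3:
  assumes "lie_bialgebra_WW \<delta>"
  shows "\<exists>r. fsupp r \<and> antisym2 r \<and> (\<forall>x. fsupp x \<longrightarrow> \<delta> x = ad2 x r)"
proof -
  obtain r where r: "fsupp r" "antisym2 r" and basis: "\<And>a y. \<delta> (bvec a) y = ad_basis a r y"
    using basis_cocycle_inner[OF lie_bialgebra_WW_basis_cocycle[OF assms]]
    unfolding inner_on_basis_def by blast
  have "\<delta> x y = ad2 x r y" if x: "fsupp x" for x y
  proof -
    have "\<delta> x y = \<delta> (\<lambda>i. \<Sum>a\<in>supp x. x a * bvec a i) y"
      using fsupp_eq_sum_bvec[OF x] by metis
    also have "\<dots> = (\<Sum>a\<in>supp x. x a * ad2 (bvec a) r y)"
      using lie_bialgebra_WW_sum_bvec[OF assms] x by (simp add: fsupp_def basis ad2_bvec[OF r(1)])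
    also have "\<dots> = ad2 x r y"
      using ad2_eq_sum_bvec[OF x] by simp
    finally show ?thesis .
  qed
  with r show ?thesis by blast
qed

end
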